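(* Let $\mathcal{P}$ be a set of mutually commuting Pauli operators on $n$ qubits, and let $r$ be the number of independent generators of $\mathcal{P}$. Run the qubitwise diagonalization algorithm described in the context on $\mathcal{P}$, choosing at every stage $\alpha$ a nonzero null vector of the stage tableau of symplectic weight at most $\lfloor r^{(\alpha)}/2\rfloor+1$ (such a vector always exists, e.g. one of minimum weight). Then the total number of CNOT gate conjugations in the resulting diagonalizing circuit is at most $n\lfloor r/2\rfloor-\lfloor r/2\rfloor^2$.
   Context: A Pauli operator on $m$ qubits is encoded, up to phase, by $u=(\boldsymbol{x},\boldsymbol{z})\in\mathbb{F}_2^{2m}$ via $P=\bigotimes_{j=1}^m X^{x_j}Z^{z_j}$. For a set of Pauli operators, the tableau $(\mathcal{X}\mid\mathcal{Z})$ is the binary matrix whose rows encode the operators; the number of independent generators is its $\mathbb{F}_2$-rank. An operator is diagonal on qubit $j$ if its $j$-th tensor factor is $I$ or $Z$. The symplectic weight of $(\boldsymbol{v},\boldsymbol{w})\in\mathbb{F}_2^{2m}$ is $\omega(\boldsymbol{v},\boldsymbol{w})=|\{j: (v_j,w_j)\neq(0,0)\}|$. Qubitwise diagonalization algorithm. Input: a set of mutually commuting Pauli operators on $n$ qubits. At stage $\alpha$: discard the qubits on which all operators are already diagonal; let $n^{(\alpha)}$ be the number of remaining qubits (stop if $n^{(\alpha)}=0$); let $T^{(\alpha)}$ be an independent generating set of the operators restricted to the remaining qubits, of size $r^{(\alpha)}$, and let $M^{(\alpha)}=(\mathcal{X}^{(\alpha)}\mid\mathcal{Z}^{(\alpha)})$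 be its $r^{(\alpha)}\times 2n^{(\alpha)}$ tableau. Choose a nonzero $(\boldsymbol{v},\boldsymbol{w})$ with $M^{(\alpha)}(\boldsymbol{v};\boldsymbol{w})=0$ over $\mathbb{F}_2$, and a qubit $i$ with $(v_i,w_i)\neq(0,0)$. Step 1: for each qubit $j$, if $v_j=0,w_j=1$ conjugate by $\mathrm{H}(j)$; if $v_j=w_j=1$ conjugate by $\mathrm{S}(j)$ then $\mathrm{H}(j)$. Step 2: for each $j\neq i$ with $(v_j,w_j)\neq(0,0)$, conjugate by $\mathrm{CNOT}(j,i)$. After this all operators are diagonal on qubit $i$; then proceed to stage $\alpha+1$. The output circuit is the composition of all gates used. *)

theory Defs
  imports Main
begin

text \<open>A Pauli operator on qubits 0..n-1 (up to phase) is encoded by its binary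
  symplectic vector (x, z); qubit j carries X^(x j) Z^(z j).\<close>

type_synonym pauli = "(nat \<Rightarrow> bool) \<times> (nat \<Rightarrow> bool)"

definition pauli_on :: "nat \<Rightarrow> pauli \<Rightarrow> bool" where
  "pauli_on n p \<longleftrightarrow> (\<forall>j\<ge>n. \<not> fst p j \<and> \<not> snd p j)"

text \<open>Two Paulis commute iff their symplectic inner product vanishes over F2.\<close>
definition commute :: "nat \<Rightarrow> pauli \<Rightarrow> pauli \<Rightarrow> bool" where
  "commute n p q \<longleftrightarrow>
     even (card {j. j < n \<and> fst p j \<and> snd q j} + card {j. j < n \<and> snd p j \<and> fst q j})"

definition pxor :: "pauli \<Rightarrow> pauli \<Rightarrow> pauli" where
  "pxor p q = ((\<lambda>j. fst p j \<noteq> fst q j), (\<lambda>j. snd p j \<noteq> snd q j))"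

inductive_set f2span :: "pauli set \<Rightarrow> pauli set" for T where
  zero: "((\<lambda>_. False), (\<lambda>_. False)) \<in> f2span T"
| add: "a \<in> T \<Longrightarrow> b \<in> f2span T \<Longrightarrow> pxor a b \<in> f2span T"

definition f2_rank :: "pauli set \<Rightarrow> nat" where
  "f2_rank S = (LEAST k. \<exists>T. finite T \<and> card T = k \<and> T \<subseteq> S \<and> S \<subseteq> f2span T)"

text \<open>Qubits on which not all operators are diagonal (factor not I or Z).\<close>
definition remaining :: "nat \<Rightarrow> pauli set \<Rightarrow> nat set" where
  "remaining n P = {j. j < n \<and> (\<exists>p\<in>P. fst p j)}"

definition restrict :: "nat set \<Rightarrow> pauli \<Rightarrow> pauli" where
  "restrict R p = ((\<lambda>j. j \<in> R \<and> fst p j), (\<lambda>j. j \<in> R \<and> snd p j))"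

definition sweight :: "nat set \<Rightarrow> (nat \<Rightarrow> bool) \<Rightarrow> (nat \<Rightarrow> bool) \<Rightarrow> nat" where
  "sweight R v w = card {j \<in> R. v j \<or> w j}"

datatype gate = Hg nat | Sg nat | CNOT nat nat

fun conj_gate :: "gate \<Rightarrow> pauli \<Rightarrow> pauli" where
  "conj_gate (Hg j) (x, z) = (x(j := z j), z(j := x j))"
| "conj_gate (Sg j) (x, z) = (x, z(j := (z j \<noteq> x j)))"
| "conj_gate (CNOT c t) (x, z) = (x(t := (x t \<noteq> x c)), z(c := (z c \<noteq> z t)))"

text \<open>Gates are applied in list order (first element first).\<close>
definition apply_circuit :: "gate list \<Rightarrow> pauli \<Rightarrow> pauli" where
  "apply_circuit gs p = fold conj_gate gs p"

fun is_cnot :: "gate \<Rightarrow> bool" where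
  "is_cnot (CNOT _ _) = True"
| "is_cnot _ = False"

definition stage_circuit :: "nat \<Rightarrow> (nat \<Rightarrow> bool) \<Rightarrow> (nat \<Rightarrow> bool) \<Rightarrow> nat \<Rightarrow> gate list" where
  "stage_circuit n v w i =
     concat (map (\<lambda>j. if \<not> v j \<and> w j then [Hg j] else if v j \<and> w j then [Sg j, Hg j] else [])
                 [0..<n])
     @ map (\<lambda>j. CNOT j i) (filter (\<lambda>j. j \<noteq> i \<and> (v j \<or> w j)) [0..<n])"

text \<open>(v, w) lies in the null space of the stage tableau: it annihilates (under the
  ordinary F2 dot product x.v + z.w) every operator restricted to R, equivalently
  every row of the tableau of a generating set of these restrictions.\<close>
definition null_vec :: "nat set \<Rightarrow> pauli set \<Rightarrow> (nat \<Rightarrow> bool) \<Rightarrow> (nat \<Rightarrow> bool) \<Rightarrow> bool" where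
  "null_vec R P v w \<longleftrightarrow>
     (\<forall>p\<in>P. even (card {j \<in> R. fst p j \<and> v j} + card {j \<in> R. snd p j \<and> w j}))"

inductive qd_run :: "nat \<Rightarrow> pauli set \<Rightarrow> gate list \<Rightarrow> bool" where
  stop: "remaining n P = {} \<Longrightarrow> qd_run n P []"
| stage: "\<lbrakk> R = remaining n P; R \<noteq> {};
            ra = f2_rank (restrict R ` P);
            \<forall>j. j \<notin> R \<longrightarrow> \<not> v j \<and> \<not> w j;
            \<exists>j\<in>R. v j \<or> w j;
            null_vec R P v w;
            sweight R v w \<le> ra div 2 + 1;
            i \<in> R; v i \<or> w i;
            gs = stage_circuit n v w i;
            qd_run n (apply_circuit gs ` P) rest \<rbrakk>
          \<Longrightarrow> qd_run n P (gs @ rest)"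

end

theory Submission
  imports Defs
begin

text \<open>Commuting Paulis on n qubits form an isotropic set for the symplectic form, and an
  isotropic set supported on m qubits has rank at most m: clear one qubit using at most two
  generators; when two are needed they anticommute there, and stripping that qubit from one of
  them yields an extra independent isotropic vector on the other m - 1 qubits. The gates
  preserve the form and the rank cannot grow, and on the qubits where everything is already
  diagonal the form vanishes. So a stage with m remaining qubits has stage rank at most
  min r m, uses at most min (r div 2) (m div 2) CNOTs, and diagonalises qubit i without
  disturbing the diagonal ones, leaving at most m - 1 remaining qubits. Summing
  min k (m div 2) over m = 1, ..., n with k = r div 2 and 2 k \<le> n gives n k - k^2.\<close>

abbreviation pzero :: pauli where "pzero \<equiv> ((\<lambda>_. False), (\<lambda>_. False))"

definition parity :: "nat set \<Rightarrow> (nat \<Rightarrow> bool) \<Rightarrow> bool" where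
  "parity R f \<longleftrightarrow> odd (card {j\<in>R. f j})"

lemma parity_empty [simp]: "\<not> parity {} f"
  by (simp add: parity_def)

lemma parity_insert:
  assumes "finite R" "j \<notin> R"
  shows "parity (insert j R) f = (parity R f \<noteq> f j)"
proof (cases "f j")
  case True
  then have "{i\<in>insert j R. f i} = insert j {i\<in>R. f i}" by auto
  then show ?thesis using True assms by (simp add: parity_def)
next
  case False
  then have "{i\<in>insert j R. f i} = {i\<in>R. f i}" by auto
  then show ?thesis using False by (simp add: parity_def)
qed

lemma parity_remove:
  assumes "finite R" "j \<in> R"
  shows "parity R f = (parity (R - {j}) f \<noteq> f j)"
  using parity_insert[of "R - {j}" j f] assms by (simp add: insert_absorb)

lemma parity_cong: "(\<And>j. j \<in> R \<Longrightarrow> f j = g j) \<Longrightarrow> parity R f = parity R g"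
  unfolding parity_def by (metis (mono_tags, lifting) Collect_cong)

lemma parity_xor: "finite R \<Longrightarrow> parity R (\<lambda>j. f j \<noteq> g j) = (parity R f \<noteq> parity R g)"
  by (induction R rule: finite_induct) (auto simp: parity_insert)

lemma parity_subset_support:
  assumes "A \<subseteq> B" "\<And>j. j \<in> B - A \<Longrightarrow> \<not> f j"
  shows "parity B f = parity A f"
proof -
  have "{j\<in>B. f j} = {j\<in>A. f j}" using assms by auto
  then show ?thesis by (simp add: parity_def)
qed

lemma pxor_pzero [simp]: "pxor a pzero = a" "pxor pzero a = a"
  by (simp_all add: pxor_def)

lemma pxor_assoc: "pxor (pxor a b) c = pxor a (pxor b c)"
  by (auto simp: pxor_def)

lemma pxor_left_commute: "pxor a (pxor b c) = pxor b (pxor a c)"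
  by (auto simp: pxor_def)

lemma pxor_cancel [simp]: "pxor (pxor a b) b = a" "pxor a (pxor a b) = b"
  by (auto simp: pxor_def prod_eq_iff)

lemma fst_pxor [simp]: "fst (pxor a b) j = (fst a j \<noteq> fst b j)"
  and snd_pxor [simp]: "snd (pxor a b) j = (snd a j \<noteq> snd b j)"
  by (simp_all add: pxor_def)

lemma f2span_base: "a \<in> T \<Longrightarrow> a \<in> f2span T"
  using f2span.add[OF _ f2span.zero, of a T] by simp

lemma f2span_pxor: "a \<in> f2span T \<Longrightarrow> b \<in> f2span T \<Longrightarrow> pxor a b \<in> f2span T"
proof (induction a rule: f2span.induct)
  case zero
  then show ?case by simp
next
  case (add a c)
  then have "pxor a (pxor c b) \<in> f2span T" by (simp add: f2span.add)
  then show ?case by (simp add: pxor_assoc)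
qed

lemma f2span_subset: "A \<subseteq> f2span B \<Longrightarrow> f2span A \<subseteq> f2span B"
proof
  fix x assume "A \<subseteq> f2span B" and "x \<in> f2span A"
  then show "x \<in> f2span B"
    by (induction rule: f2span.induct[OF \<open>x \<in> f2span A\<close>]) (auto intro: f2span.zero f2span_pxor)
qed

lemma f2span_mono: "A \<subseteq> B \<Longrightarrow> f2span A \<subseteq> f2span B"
  by (rule f2span_subset) (auto intro: f2span_base)

lemma f2span_insert_cases:
  "x \<in> f2span (insert a A) \<Longrightarrow> x \<in> f2span A \<or> pxor a x \<in> f2span A"
proof (induction x rule: f2span.induct)
  case zero
  then show ?case by (simp add: f2span.zero)
next
  case (add c b)
  show ?case
  proof (cases "c = a")
    case True
    then show ?thesis using add.IH by auto
  next
    case False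
    then have "c \<in> A" using add.hyps by simp
    then have "b \<in> f2span A \<Longrightarrow> pxor c b \<in> f2span A"
      and "pxor a b \<in> f2span A \<Longrightarrow> pxor a (pxor c b) \<in> f2span A"
      by (auto simp: pxor_left_commute[of a] intro: f2span.add)
    then show ?thesis using add.IH by blast
  qed
qed

definition f2_linear :: "(pauli \<Rightarrow> pauli) \<Rightarrow> bool" where
  "f2_linear f \<longleftrightarrow> f pzero = pzero \<and> (\<forall>a b. f (pxor a b) = pxor (f a) (f b))"

lemma f2_linear_comp: "f2_linear f \<Longrightarrow> f2_linear g \<Longrightarrow> f2_linear (f \<circ> g)"
  unfolding f2_linear_def comp_def by metis

lemma f2span_image: "x \<in> f2span T \<Longrightarrow> f2_linear f \<Longrightarrow> f x \<in> f2span (f ` T)"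
proof (induction x rule: f2span.induct)
  case zero
  then show ?case by (simp add: f2_linear_def f2span.zero)
next
  case (add a b)
  then have "pxor (f a) (f b) \<in> f2span (f ` T)" by (blast intro: f2span.add)
  then show ?case using add.prems unfolding f2_linear_def by metis
qed

definition symplectic_at :: "pauli \<Rightarrow> pauli \<Rightarrow> nat \<Rightarrow> bool" where
  "symplectic_at p q j \<longleftrightarrow> (fst p j \<and> snd q j) \<noteq> (snd p j \<and> fst q j)"

definition symplectic :: "nat set \<Rightarrow> pauli \<Rightarrow> pauli \<Rightarrow> bool" where
  "symplectic R p q = parity R (symplectic_at p q)"

definition isotropic :: "nat set \<Rightarrow> pauli set \<Rightarrow> bool" where
  "isotropic R S \<longleftrightarrow> (\<forall>p\<in>S. \<forall>q\<in>S. \<not> symplectic R p q)"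

definition supported :: "nat set \<Rightarrow> pauli \<Rightarrow> bool" where
  "supported R p \<longleftrightarrow> (\<forall>j. j \<notin> R \<longrightarrow> \<not> fst p j \<and> \<not> snd p j)"

lemma symplectic_commute: "symplectic R p q = symplectic R q p"
  unfolding symplectic_def symplectic_at_def by (rule parity_cong) auto

lemma symplectic_pzero [simp]: "\<not> symplectic R pzero q"
  by (simp add: symplectic_def symplectic_at_def parity_def)

lemma symplectic_pxor_left:
  "finite R \<Longrightarrow> symplectic R (pxor a b) q = (symplectic R a q \<noteq> symplectic R b q)"
proof -
  assume "finite R"
  have "symplectic_at (pxor a b) q = (\<lambda>j. symplectic_at a q j \<noteq> symplectic_at b q j)"
    by (auto simp: symplectic_at_def)
  then show ?thesis unfolding symplectic_def by (simp only: parity_xor[OF \<open>finite R\<close>])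
qed

lemma symplectic_insert:
  "finite R \<Longrightarrow> j \<notin> R \<Longrightarrow>
    symplectic (insert j R) p q = (symplectic R p q \<noteq> symplectic_at p q j)"
  by (simp add: symplectic_def parity_insert)

lemma isotropic_f2span:
  assumes "finite R" "isotropic R S"
  shows "isotropic R (f2span S)"
proof -
  have orth: "\<not> symplectic R x q" if "x \<in> f2span S" "\<forall>a\<in>S. \<not> symplectic R a q" for x q
    using that
    by (induction x rule: f2span.induct) (simp_all add: symplectic_pxor_left[OF assms(1)])
  have "\<forall>a\<in>S. \<not> symplectic R a q" if "q \<in> f2span S" for q
    using assms(2) orth[OF that] symplectic_commute unfolding isotropic_def by metis
  then show ?thesis unfolding isotropic_def using orth by blast
qed

lemma supported_f2span: "x \<in> f2span S \<Longrightarrow> \<forall>p\<in>S. supported R p \<Longrightarrow> supported R x"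
  by (induction x rule: f2span.induct) (auto simp: supported_def)

lemma symplectic_self [simp]: "\<not> symplectic R p p"
  by (simp add: symplectic_def symplectic_at_def parity_def conj_commute)

lemma symplectic_insert_vanishing:
  assumes "finite R" "j \<notin> R" "\<not> fst q j" "\<not> snd q j"
  shows "symplectic (insert j R) p q = symplectic R p q"
  using assms by (simp add: symplectic_insert symplectic_at_def)

lemma finite_supported:
  assumes "finite R" "\<forall>p\<in>S. supported R p"
  shows "finite S"
proof -
  let ?pair = "\<lambda>(A, B). ((\<lambda>j. j \<in> A), (\<lambda>j. j \<in> B))"
  have "{p. supported R p} \<subseteq> ?pair ` (Pow R \<times> Pow R)"
  proof
    fix p assume "p \<in> {p. supported R p}"
    then have "({j. fst p j}, {j. snd p j}) \<in> Pow R \<times> Pow R"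
      by (auto simp: supported_def)
    moreover have "p = ?pair ({j. fst p j}, {j. snd p j})" by (cases p) auto
    ultimately show "p \<in> ?pair ` (Pow R \<times> Pow R)" by blast
  qed
  then have "finite {p. supported R p}" by (rule finite_subset) (simp add: assms(1))
  moreover have "S \<subseteq> {p. supported R p}" using assms(2) by blast
  ultimately show ?thesis by (rule finite_subset[rotated])
qed

lemma pauli_on_iff_supported: "pauli_on n p \<longleftrightarrow> supported {..<n} p"
  by (auto simp: pauli_on_def supported_def)

lemma commute_iff_not_symplectic: "commute n p q \<longleftrightarrow> \<not> symplectic {..<n} p q"
proof -
  have "symplectic {..<n} p q =
      (parity {..<n} (\<lambda>j. fst p j \<and> snd q j) \<noteq> parity {..<n} (\<lambda>j. snd p j \<and> fst q j))"
    unfolding symplectic_def symplectic_at_def by (rule parity_xor) simp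
  then show ?thesis by (simp add: commute_def parity_def)
qed

lemma f2_rank_le: "finite T \<Longrightarrow> T \<subseteq> S \<Longrightarrow> S \<subseteq> f2span T \<Longrightarrow> f2_rank S \<le> card T"
  unfolding f2_rank_def by (rule Least_le) blast

lemma f2_rank_witness:
  assumes "finite S"
  obtains T where "finite T" "T \<subseteq> S" "S \<subseteq> f2span T" "card T = f2_rank S"
proof -
  have "\<exists>k T. finite T \<and> card T = k \<and> T \<subseteq> S \<and> S \<subseteq> f2span T"
    using assms by (blast intro: f2span_base)
  then have "\<exists>T. finite T \<and> card T = f2_rank S \<and> T \<subseteq> S \<and> S \<subseteq> f2span T"
    unfolding f2_rank_def by (rule LeastI_ex)
  then show ?thesis using that by blast
qed

lemma f2_rank_image_le:
  assumes "finite S" "f2_linear f"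
  shows "f2_rank (f ` S) \<le> f2_rank S"
proof -
  obtain T where T: "finite T" "T \<subseteq> S" "S \<subseteq> f2span T" "card T = f2_rank S"
    using f2_rank_witness[OF assms(1)] .
  have "f ` S \<subseteq> f2span (f ` T)" using T(3) f2span_image[OF _ assms(2)] by blast
  then have "f2_rank (f ` S) \<le> card (f ` T)" using T by (intro f2_rank_le) auto
  also have "\<dots> \<le> card T" using T(1) by (rule card_image_le)
  finally show ?thesis using T(4) by simp
qed

lemma f2_rank_insert_notin:
  assumes "finite S" "x \<notin> f2span S"
  shows "Suc (f2_rank S) \<le> f2_rank (insert x S)"
proof -
  obtain T where T: "finite T" "T \<subseteq> insert x S" "insert x S \<subseteq> f2span T"
    "card T = f2_rank (insert x S)"
    using f2_rank_witness[of "insert x S"] assms(1) by blast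
  have "x \<in> T"
  proof (rule ccontr)
    assume "x \<notin> T"
    then have "f2span T \<subseteq> f2span S" using T(2) by (intro f2span_mono) blast
    then show False using T(3) assms(2) by blast
  qed
  have span_S: "f2span (T - {x}) \<subseteq> f2span S" using T(2) by (intro f2span_mono) blast
  have "S \<subseteq> f2span (T - {x})"
  proof
    fix s assume "s \<in> S"
    then have "s \<in> f2span (insert x (T - {x}))" using T(3) \<open>x \<in> T\<close> by (auto simp: insert_absorb)
    then consider "s \<in> f2span (T - {x})" | "pxor x s \<in> f2span (T - {x})"
      using f2span_insert_cases by blast
    then show "s \<in> f2span (T - {x})"
    proof cases
      case 2
      then have "pxor (pxor x s) s \<in> f2span S"
        using span_S \<open>s \<in> S\<close> by (blast intro: f2span_pxor f2span_base)
      then show ?thesis using assms(2) by simp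
    qed
  qed
  then have "f2_rank S \<le> card (T - {x})" using T(1,2) by (intro f2_rank_le) auto
  also have "\<dots> < card T" using T(1) \<open>x \<in> T\<close> by (rule card_Diff1_less)
  finally show ?thesis using T(4) by simp
qed

lemma f2_rank_le_correction:
  assumes "finite S" "E \<subseteq> S" "finite E" "\<forall>p\<in>S. pxor p (g p) \<in> f2span E"
  shows "f2_rank S \<le> card E + f2_rank (g ` S)"
proof -
  obtain T' where T': "finite T'" "T' \<subseteq> g ` S" "g ` S \<subseteq> f2span T'" "card T' = f2_rank (g ` S)"
    using f2_rank_witness[of "g ` S"] assms(1) by blast
  define T where "T = inv_into S g ` T'"
  have g_inv: "g (inv_into S g y) = y" if "y \<in> T'" for y
    using T'(2) that by (blast intro: f_inv_into_f)
  have T: "T \<subseteq> S" "g ` T = T'" "card T \<le> card T'"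
    unfolding T_def using T'(2) by (blast intro: inv_into_into)
      (simp_all add: image_image g_inv card_image_le[OF T'(1)] cong: image_cong)
  have ET: "E \<union> T \<subseteq> S" using assms(2) T(1) by blast
  have span_ET: "p \<in> f2span (E \<union> T) \<Longrightarrow> p \<in> S \<Longrightarrow> g p \<in> f2span (E \<union> T)" for p
    using assms(4) f2span_mono[of E "E \<union> T"] f2span_pxor[of p _ "pxor p (g p)"] by auto
  have "T' \<subseteq> f2span (E \<union> T)"
    using T(1,2) span_ET f2span_base[of _ "E \<union> T"] by blast
  then have "g ` S \<subseteq> f2span (E \<union> T)" using T'(3) f2span_subset by blast
  have "S \<subseteq> f2span (E \<union> T)"
  proof
    fix p assume "p \<in> S"
    then have "pxor p (g p) \<in> f2span (E \<union> T)" "g p \<in> f2span (E \<union> T)"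
      using assms(4) f2span_mono[of E "E \<union> T"] \<open>g ` S \<subseteq> f2span (E \<union> T)\<close> by auto
    then show "p \<in> f2span (E \<union> T)" using f2span_pxor by fastforce
  qed
  moreover have "finite (E \<union> T)" using assms(3) T'(1) by (simp add: T_def)
  ultimately have "f2_rank S \<le> card (E \<union> T)" using ET by (intro f2_rank_le)
  also have "\<dots> \<le> card E + card T" by (rule card_Un_le)
  finally show ?thesis using T(3) T'(4) by simp
qed

text \<open>On one qubit, two Paulis anticommute iff they are distinct and both non-identity.\<close>
lemma qubit_values_cases:
  obtains (single) E where "E \<subseteq> S" "finite E" "card E \<le> 1"
      "\<forall>p\<in>S. \<exists>e\<in>f2span E. fst e j = fst p j \<and> snd e j = snd p j"
  | (anticommuting) t1 t2 where "t1 \<in> S" "t2 \<in> S" "symplectic_at t1 t2 j"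
proof (cases "\<exists>t1\<in>S. \<exists>t2\<in>S. symplectic_at t1 t2 j")
  case True
  then show ?thesis using anticommuting by blast
next
  case no_pair: False
  show ?thesis
  proof (cases "\<exists>t\<in>S. fst t j \<or> snd t j")
    case True
    then obtain t where "t \<in> S" "fst t j \<or> snd t j" by blast
    then have "\<exists>e\<in>{pzero, t}. fst e j = fst p j \<and> snd e j = snd p j" if "p \<in> S" for p
      using no_pair that by (auto simp: symplectic_at_def)
    moreover have "{pzero, t} \<subseteq> f2span {t}" by (auto intro: f2span.zero f2span_base)
    ultimately have "\<forall>p\<in>S. \<exists>e\<in>f2span {t}. fst e j = fst p j \<and> snd e j = snd p j" by blast
    then show ?thesis using single[of "{t}"] \<open>t \<in> S\<close> by simp
  next
    case False
    then have "\<forall>p\<in>S. \<exists>e\<in>f2span {}. fst e j = fst p j \<and> snd e j = snd p j"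
      by (intro ballI bexI[of _ pzero]) (auto intro: f2span.zero)
    then show ?thesis using single[of "{}"] by simp
  qed
qed

lemma anticommuting_pair_covers:
  assumes "symplectic_at t1 t2 j"
  shows "\<exists>e\<in>f2span {t1, t2}. fst e j = fst p j \<and> snd e j = snd p j"
proof -
  have "\<exists>e\<in>{pzero, t1, t2, pxor t1 t2}. fst e j = fst p j \<and> snd e j = snd p j"
    using assms by (auto simp: symplectic_at_def)
  moreover have "t1 \<in> f2span {t1, t2}" "t2 \<in> f2span {t1, t2}" by (simp_all add: f2span_base)
  then have "{pzero, t1, t2, pxor t1 t2} \<subseteq> f2span {t1, t2}"
    by (simp add: f2span.zero f2span_pxor)
  ultimately show ?thesis by blast
qed

lemma qubit_clearing:
  assumes fin: "finite R" "j \<notin> R"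
    and S: "\<forall>p\<in>S. supported (insert j R) p" "isotropic (insert j R) S"
    and E: "E \<subseteq> S" "finite E" "\<forall>p\<in>S. \<exists>e\<in>f2span E. fst e j = fst p j \<and> snd e j = snd p j"
  obtains g where "g ` S \<subseteq> f2span S" "\<forall>p\<in>g ` S. \<not> fst p j \<and> \<not> snd p j"
    "\<forall>p\<in>g ` S. supported R p" "isotropic R (g ` S)" "f2_rank S \<le> card E + f2_rank (g ` S)"
proof -
  define c where "c p = (SOME e. e \<in> f2span E \<and> fst e j = fst p j \<and> snd e j = snd p j)" for p
  define g where "g p = pxor p (c p)" for p
  have corr: "pxor p (g p) \<in> f2span E" "\<not> fst (g p) j" "\<not> snd (g p) j" if "p \<in> S" for p
  proof -
    have "c p \<in> f2span E \<and> fst (c p) j = fst p j \<and> snd (c p) j = snd p j"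
      unfolding c_def
      using someI_ex[of "\<lambda>e. e \<in> f2span E \<and> fst e j = fst p j \<and> snd e j = snd p j"] E(3) that
      by blast
    then show "pxor p (g p) \<in> f2span E" "\<not> fst (g p) j" "\<not> snd (g p) j"
      by (simp_all add: g_def)
  qed
  have span: "g ` S \<subseteq> f2span S"
  proof
    fix u assume "u \<in> g ` S"
    then obtain p where "p \<in> S" "u = pxor p (pxor p (g p))" by auto
    moreover have "pxor p (g p) \<in> f2span S" using corr(1) \<open>p \<in> S\<close> E(1) f2span_mono by blast
    ultimately show "u \<in> f2span S" by (blast intro: f2span_pxor f2span_base)
  qed
  have clear: "\<forall>u\<in>g ` S. \<not> fst u j \<and> \<not> snd u j" using corr(2,3) by blast
  have "\<forall>u\<in>g ` S. supported R u"
  proof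
    fix u assume "u \<in> g ` S"
    then have "supported (insert j R) u" using supported_f2span span S(1) by blast
    then show "supported R u" using clear \<open>u \<in> g ` S\<close> unfolding supported_def by auto
  qed
  moreover have "isotropic R (g ` S)"
    unfolding isotropic_def
  proof (intro ballI)
    fix u v assume "u \<in> g ` S" "v \<in> g ` S"
    then have "\<not> symplectic (insert j R) u v"
      using span isotropic_f2span[OF _ S(2)] fin(1) unfolding isotropic_def by blast
    then show "\<not> symplectic R u v"
      using symplectic_insert_vanishing[OF fin] clear \<open>v \<in> g ` S\<close> by blast
  qed
  moreover have "f2_rank S \<le> card E + f2_rank (g ` S)"
    using f2_rank_le_correction[OF finite_supported[OF _ S(1)] E(1,2)] fin(1) corr(1) by simp
  ultimately show ?thesis using span clear by (intro that[of g])
qed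

definition clear_qubit :: "nat \<Rightarrow> pauli \<Rightarrow> pauli" where
  "clear_qubit j p = ((fst p)(j := False), (snd p)(j := False))"

lemma symplectic_clear_qubit: "j \<notin> R \<Longrightarrow> symplectic R (clear_qubit j p) q = symplectic R p q"
  unfolding symplectic_def clear_qubit_def symplectic_at_def by (rule parity_cong) auto

lemma clear_qubit_notin_f2span:
  assumes fin: "finite R" "j \<notin> R" and W: "isotropic (insert j R) (f2span S)"
    and t: "t1 \<in> S" "t2 \<in> S" "symplectic_at t1 t2 j"
  shows "clear_qubit j t1 \<notin> f2span S"
proof
  have t_span: "t1 \<in> f2span S" "t2 \<in> f2span S" using t by (simp_all add: f2span_base)
  assume "clear_qubit j t1 \<in> f2span S"
  then have "\<not> symplectic (insert j R) (clear_qubit j t1) t2"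
    using W t_span unfolding isotropic_def by blast
  then have "\<not> symplectic R t1 t2"
    using symplectic_clear_qubit[OF fin(2)] fin
    by (simp add: symplectic_insert symplectic_at_def clear_qubit_def)
  moreover have "\<not> symplectic (insert j R) t1 t2" using W t_span unfolding isotropic_def by blast
  ultimately show False using t(3) fin by (simp add: symplectic_insert)
qed

text \<open>Stripping qubit j from t1 gives a vector orthogonal to the cleared set but outside its
  span; this buys back the second generator spent on t1 and t2.\<close>
lemma f2_rank_isotropic_anticommuting_step:
  assumes fin: "finite R" "j \<notin> R"
    and IH: "\<And>S'. \<forall>p\<in>S'. supported R p \<Longrightarrow> isotropic R S' \<Longrightarrow> f2_rank S' \<le> card R"
    and S: "\<forall>p\<in>S. supported (insert j R) p" "isotropic (insert j R) S"
    and t: "t1 \<in> S" "t2 \<in> S" "symplectic_at t1 t2 j"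
  shows "f2_rank S \<le> Suc (card R)"
proof -
  have E: "{t1, t2} \<subseteq> S" "finite {t1, t2}"
    "\<forall>p\<in>S. \<exists>e\<in>f2span {t1, t2}. fst e j = fst p j \<and> snd e j = snd p j"
    using t anticommuting_pair_covers by auto
  obtain g where g: "g ` S \<subseteq> f2span S" "\<forall>p\<in>g ` S. \<not> fst p j \<and> \<not> snd p j"
    "\<forall>p\<in>g ` S. supported R p" "isotropic R (g ` S)" "f2_rank S \<le> card {t1, t2} + f2_rank (g ` S)"
    using qubit_clearing[OF fin S E] .
  define t1' where "t1' = clear_qubit j t1"
  have W: "isotropic (insert j R) (f2span S)" using isotropic_f2span fin S(2) by simp
  have t_span: "t1 \<in> f2span S" using t by (simp add: f2span_base)
  have "t1' \<notin> f2span S" unfolding t1'_def using clear_qubit_notin_f2span[OF fin W t] .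
  then have notin: "t1' \<notin> f2span (g ` S)" using f2span_subset[OF g(1)] by blast
  have "\<not> symplectic R t1' u" if "u \<in> g ` S" for u
  proof -
    have "\<not> symplectic (insert j R) t1 u" using W t_span g(1) that unfolding isotropic_def by blast
    then show ?thesis
      using symplectic_clear_qubit[OF fin(2)] symplectic_insert_vanishing[OF fin] g(2) that
      unfolding t1'_def by blast
  qed
  then have "isotropic R (insert t1' (g ` S))"
    using g(4) symplectic_commute unfolding isotropic_def by (metis insert_iff symplectic_self)
  moreover have "supported R t1'"
    using S(1) t(1) fin unfolding supported_def t1'_def clear_qubit_def by auto
  ultimately have "f2_rank (insert t1' (g ` S)) \<le> card R" using IH g(3) by blast
  moreover have "Suc (f2_rank (g ` S)) \<le> f2_rank (insert t1' (g ` S))"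
    using f2_rank_insert_notin[OF _ notin] finite_supported[OF fin(1) g(3)] by blast
  moreover have "card {t1, t2} \<le> 2" by (simp add: card_insert_if)
  ultimately show ?thesis using g(5) by linarith
qed

lemma f2_rank_isotropic_le:
  assumes "finite R" "\<forall>p\<in>S. supported R p" "isotropic R S"
  shows "f2_rank S \<le> card R"
  using assms
proof (induction R arbitrary: S rule: finite_induct)
  case empty
  then have "p = pzero" if "p \<in> S" for p
    using that by (auto simp: supported_def prod_eq_iff)
  then have "S \<subseteq> f2span {}" using f2span.zero by blast
  then show ?case using f2_rank_le[of "{}" S] by simp
next
  case (insert j R)
  show ?case
  proof (cases S j rule: qubit_values_cases)
    case (single E)
    obtain g where g: "\<forall>p\<in>g ` S. supported R p" "isotropic R (g ` S)"
      "f2_rank S \<le> card E + f2_rank (g ` S)"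
      using qubit_clearing[OF insert.hyps insert.prems single(1,2,4)] by metis
    have "f2_rank (g ` S) \<le> card R" using insert.IH g(1,2) .
    then show ?thesis using g(3) single(3) insert.hyps by simp
  next
    case (anticommuting t1 t2)
    then show ?thesis
      using f2_rank_isotropic_anticommuting_step[OF insert.hyps insert.IH insert.prems] insert.hyps
      by simp
  qed
qed

definition gate_on :: "nat \<Rightarrow> gate \<Rightarrow> bool" where
  "gate_on n g \<longleftrightarrow>
    (case g of Hg j \<Rightarrow> j < n | Sg j \<Rightarrow> j < n | CNOT c t \<Rightarrow> c < n \<and> t < n \<and> c \<noteq> t)"

lemma conj_gate_f2_linear: "f2_linear (conj_gate g)"
proof -
  have "conj_gate g (pxor (a1, a2) (b1, b2)) = pxor (conj_gate g (a1, a2)) (conj_gate g (b1, b2))"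
    for a1 a2 b1 b2
    by (cases g) (auto simp: pxor_def fun_eq_iff)
  then show ?thesis unfolding f2_linear_def by (cases g) (auto simp: fun_eq_iff)
qed

lemma apply_circuit_Cons: "apply_circuit (g # gs) = apply_circuit gs \<circ> conj_gate g"
  by (simp add: apply_circuit_def fun_eq_iff)

lemma apply_circuit_f2_linear: "f2_linear (apply_circuit gs)"
proof (induction gs)
  case Nil
  then show ?case by (simp add: f2_linear_def apply_circuit_def)
next
  case (Cons g gs)
  then show ?case unfolding apply_circuit_Cons by (rule f2_linear_comp[OF _ conj_gate_f2_linear])
qed

lemma restrict_f2_linear: "f2_linear (restrict R)"
  by (auto simp: f2_linear_def restrict_def pxor_def)

lemma pauli_on_conj_gate: "gate_on n g \<Longrightarrow> pauli_on n p \<Longrightarrow> pauli_on n (conj_gate g p)"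
  by (cases p, cases g) (auto simp: pauli_on_def gate_on_def)

lemma symplectic_conj_gate:
  assumes "gate_on n g"
  shows "symplectic {..<n} (conj_gate g p) (conj_gate g q) = symplectic {..<n} p q"
proof (cases g)
  case (Hg j)
  then show ?thesis unfolding symplectic_def
    by (cases p, cases q) (rule parity_cong, auto simp: symplectic_at_def)
next
  case (Sg j)
  then show ?thesis unfolding symplectic_def
    by (cases p, cases q) (rule parity_cong, auto simp: symplectic_at_def)
next
  case (CNOT c t)
  then have ct: "c \<in> {..<n}" "t \<in> {..<n} - {c}" using assms by (auto simp: gate_on_def)
  have split: "parity {..<n} f = ((parity ({..<n} - {c} - {t}) f \<noteq> f t) \<noteq> f c)" for f
    using parity_remove[of "{..<n}" c f] parity_remove[of "{..<n} - {c}" t f] ct by simp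
  obtain x1 z1 x2 z2 where pq: "p = (x1, z1)" "q = (x2, z2)" by (cases p, cases q)
  let ?f = "symplectic_at (conj_gate g p) (conj_gate g q)"
  have "parity ({..<n} - {c} - {t}) ?f = parity ({..<n} - {c} - {t}) (symplectic_at p q)"
    by (rule parity_cong) (auto simp: CNOT pq symplectic_at_def)
  moreover have "(?f t \<noteq> ?f c) = (symplectic_at p q t \<noteq> symplectic_at p q c)"
    using ct by (auto simp: CNOT pq symplectic_at_def)
  ultimately show ?thesis
    unfolding symplectic_def using split[of ?f] split[of "symplectic_at p q"] by blast
qed

lemma pauli_on_apply_circuit:
  "list_all (gate_on n) gs \<Longrightarrow> pauli_on n p \<Longrightarrow> pauli_on n (apply_circuit gs p)"
  by (induction gs arbitrary: p) (auto simp: apply_circuit_def pauli_on_conj_gate)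

lemma symplectic_apply_circuit:
  "list_all (gate_on n) gs \<Longrightarrow>
    symplectic {..<n} (apply_circuit gs p) (apply_circuit gs q) = symplectic {..<n} p q"
  by (induction gs arbitrary: p q) (auto simp: apply_circuit_def symplectic_conj_gate)

lemma isotropic_apply_circuit:
  "list_all (gate_on n) gs \<Longrightarrow> isotropic {..<n} P \<Longrightarrow> isotropic {..<n} (apply_circuit gs ` P)"
  by (auto simp: isotropic_def symplectic_apply_circuit)

definition basis_change :: "(nat \<Rightarrow> bool) \<Rightarrow> (nat \<Rightarrow> bool) \<Rightarrow> nat \<Rightarrow> gate list" where
  "basis_change v w j = (if \<not> v j \<and> w j then [Hg j] else if v j \<and> w j then [Sg j, Hg j] else [])"

lemma stage_circuit_eq:
  "stage_circuit n v w i = concat (map (basis_change v w) [0..<n])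
     @ map (\<lambda>j. CNOT j i) (filter (\<lambda>j. j \<noteq> i \<and> (v j \<or> w j)) [0..<n])"
  unfolding stage_circuit_def basis_change_def ..

lemma stage_circuit_gate_on: "i < n \<Longrightarrow> list_all (gate_on n) (stage_circuit n v w i)"
  by (auto simp: stage_circuit_eq basis_change_def gate_on_def list_all_iff)

lemma cnot_count_stage_circuit:
  assumes "R \<subseteq> {..<n}" "\<forall>j. j \<notin> R \<longrightarrow> \<not> v j \<and> \<not> w j" "i \<in> R" "v i \<or> w i"
  shows "length (filter is_cnot (stage_circuit n v w i)) = sweight R v w - 1"
proof -
  let ?js = "filter (\<lambda>j. j \<noteq> i \<and> (v j \<or> w j)) [0..<n]"
  have "filter is_cnot (concat (map (basis_change v w) [0..<n])) = []"
    by (rule filter_False) (auto simp: basis_change_def)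
  then have "length (filter is_cnot (stage_circuit n v w i)) = length ?js"
    by (simp add: stage_circuit_eq filter_True)
  also have "\<dots> = card (set ?js)" by (rule distinct_card[symmetric]) simp
  also have "set ?js = {j \<in> R. v j \<or> w j} - {i}" using assms(1,2) by auto
  also have "card \<dots> = sweight R v w - 1" using assms(3,4) by (simp add: sweight_def)
  finally show ?thesis .
qed

text \<open>After Step 1, the X-part of a qubit j in the support of (v, w) is the j-th term
  of the dot product of the operator with (v, w).\<close>
definition dot_at :: "(nat \<Rightarrow> bool) \<Rightarrow> (nat \<Rightarrow> bool) \<Rightarrow> pauli \<Rightarrow> nat \<Rightarrow> bool" where
  "dot_at v w p j \<longleftrightarrow> (v j \<and> fst p j) \<noteq> (w j \<and> snd p j)"

lemma fst_basis_changes: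
  "distinct js \<Longrightarrow> fst (fold conj_gate (concat (map (basis_change v w) js)) p) k =
    (if k \<in> set js \<and> (v k \<or> w k) then dot_at v w p k else fst p k)"
proof (induction js arbitrary: p)
  case Nil
  then show ?case by simp
next
  case (Cons a js)
  let ?p = "fold conj_gate (basis_change v w a) p"
  have "fst ?p k = (if k = a \<and> (v k \<or> w k) then dot_at v w p k else fst p k)"
    and "k \<noteq> a \<Longrightarrow> dot_at v w ?p k = dot_at v w p k"
    by (cases p; auto simp: basis_change_def dot_at_def)+
  then show ?case using Cons by auto
qed

lemma fst_cnots:
  "distinct js \<Longrightarrow> i \<notin> set js \<Longrightarrow>
    fst (fold conj_gate (map (\<lambda>j. CNOT j i) js) p) =
      (fst p)(i := (fst p i \<noteq> parity (set js) (fst p)))"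
proof (induction js arbitrary: p)
  case Nil
  then show ?case by simp
next
  case (Cons a js)
  obtain x z where p: "p = (x, z)" by (cases p)
  have "parity (set js) (x(i := (x i \<noteq> x a))) = parity (set js) x"
    by (rule parity_cong) (use Cons.prems in auto)
  moreover have "parity (set (a # js)) x = (parity (set js) x \<noteq> x a)"
    using parity_insert[of "set js" a x] Cons.prems by simp
  ultimately show ?case using Cons by (auto simp: p fun_eq_iff)
qed

lemma fst_stage_circuit:
  assumes "i < n" "v i \<or> w i"
  shows "fst (apply_circuit (stage_circuit n v w i) p) k =
    (if k = i then parity {..<n} (dot_at v w p)
     else if k < n \<and> (v k \<or> w k) then dot_at v w p k else fst p k)"
proof -
  let ?js = "filter (\<lambda>j. j \<noteq> i \<and> (v j \<or> w j)) [0..<n]"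
  define p1 where "p1 = fold conj_gate (concat (map (basis_change v w) [0..<n])) p"
  have fst_p1: "fst p1 j = (if j < n \<and> (v j \<or> w j) then dot_at v w p j else fst p j)" for j
    unfolding p1_def by (subst fst_basis_changes) auto
  have "fst (apply_circuit (stage_circuit n v w i) p) =
      (fst p1)(i := (fst p1 i \<noteq> parity (set ?js) (fst p1)))"
    unfolding apply_circuit_def stage_circuit_eq fold_append comp_def p1_def[symmetric]
    by (rule fst_cnots) auto
  moreover have "(fst p1 i \<noteq> parity (set ?js) (fst p1)) = parity {..<n} (dot_at v w p)"
  proof -
    have "parity {..<n} (dot_at v w p) = (parity ({..<n} - {i}) (dot_at v w p) \<noteq> dot_at v w p i)"
      using parity_remove[of "{..<n}" i] assms(1) by simp
    moreover have "parity ({..<n} - {i}) (dot_at v w p) = parity (set ?js) (fst p1)"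
      by (rule trans[OF parity_subset_support parity_cong]) (auto simp: fst_p1 dot_at_def)
    ultimately show ?thesis using fst_p1[of i] assms by auto
  qed
  ultimately show ?thesis using fst_p1 by simp
qed

lemma remaining_stage_circuit:
  assumes R: "R = remaining n P" and vw: "\<forall>j. j \<notin> R \<longrightarrow> \<not> v j \<and> \<not> w j"
    and null: "null_vec R P v w" and i: "i \<in> R" "v i \<or> w i"
  shows "remaining n (apply_circuit (stage_circuit n v w i) ` P) \<subseteq> R - {i}"
proof
  fix k assume "k \<in> remaining n (apply_circuit (stage_circuit n v w i) ` P)"
  then obtain p where p: "p \<in> P" "k < n" "fst (apply_circuit (stage_circuit n v w i) p) k"
    by (auto simp: remaining_def)
  have Rn: "R \<subseteq> {..<n}" using R by (auto simp: remaining_def)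
  have "\<not> parity {..<n} (dot_at v w p)"
  proof -
    have "parity {..<n} (dot_at v w p) = parity R (dot_at v w p)"
      using Rn vw by (intro parity_subset_support) (auto simp: dot_at_def)
    also have "\<dots> = parity R (\<lambda>j. (fst p j \<and> v j) \<noteq> (snd p j \<and> w j))"
      by (rule parity_cong) (auto simp: dot_at_def)
    also have "\<dots> = (parity R (\<lambda>j. fst p j \<and> v j) \<noteq> parity R (\<lambda>j. snd p j \<and> w j))"
      using Rn by (intro parity_xor) (simp add: finite_subset)
    finally show ?thesis using null p(1) by (simp add: null_vec_def parity_def)
  qed
  moreover have "\<not> fst p k" if "k \<notin> R" using that p R by (auto simp: remaining_def)
  moreover have "i < n" using i(1) Rn by auto
  ultimately show "k \<in> R - {i}"
    using p(3) fst_stage_circuit[of i n v w p k] \<open>i < n\<close> i(2) vw by (cases "k = i") auto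
qed

text \<open>Off the remaining qubits every operator is diagonal, so no anticommutation is
  lost by restricting to them.\<close>
lemma isotropic_restrict_remaining:
  assumes "isotropic {..<n} P"
  shows "isotropic (remaining n P) (restrict (remaining n P) ` P)"
  unfolding isotropic_def
proof (intro ballI)
  let ?R = "remaining n P"
  fix a b assume "a \<in> restrict ?R ` P" "b \<in> restrict ?R ` P"
  then obtain p q where pq: "p \<in> P" "q \<in> P" "a = restrict ?R p" "b = restrict ?R q" by blast
  have "symplectic ?R a b = symplectic ?R p q"
    unfolding symplectic_def pq by (rule parity_cong) (auto simp: symplectic_at_def restrict_def)
  also have "\<dots> = symplectic {..<n} p q"
    unfolding symplectic_def using pq(1,2)
    by (intro parity_subset_support[symmetric]) (auto simp: remaining_def symplectic_at_def)
  finally show "\<not> symplectic ?R a b" using assms pq(1,2) by (simp add: isotropic_def)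
qed

lemma f2_rank_stage_le_remaining:
  assumes "isotropic {..<n} P"
  shows "f2_rank (restrict (remaining n P) ` P) \<le> card (remaining n P)"
proof (rule f2_rank_isotropic_le)
  show "finite (remaining n P)" by (simp add: remaining_def)
  show "\<forall>p\<in>restrict (remaining n P) ` P. supported (remaining n P) p"
    by (auto simp: supported_def restrict_def)
qed (rule isotropic_restrict_remaining[OF assms])

text \<open>A stage on m remaining qubits uses at most min k (m div 2) CNOTs and leaves
  fewer than m qubits.\<close>
fun cnot_budget :: "nat \<Rightarrow> nat \<Rightarrow> nat" where
  "cnot_budget k 0 = 0"
| "cnot_budget k (Suc m) = cnot_budget k m + min k (Suc m div 2)"

lemma cnot_budget_mono: "m \<le> m' \<Longrightarrow> cnot_budget k m \<le> cnot_budget k m'"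
  by (rule lift_Suc_mono_le[of "cnot_budget k"]) auto

lemma cnot_budget_double: "j \<le> k \<Longrightarrow> cnot_budget k (2 * j) = j * j"
  by (induction j) auto

lemma cnot_budget_closed_form: "2 * k \<le> m \<Longrightarrow> cnot_budget k m + k * k = m * k"
proof (induction m)
  case (Suc m)
  show ?case
  proof (cases "2 * k \<le> m")
    case True
    then show ?thesis using Suc by simp
  next
    case False
    then have "Suc m = 2 * k" using Suc.prems by simp
    then show ?thesis using cnot_budget_double[of k k] by simp
  qed
qed simp

lemma cnot_count_qd_run_le:
  "qd_run n P C \<Longrightarrow> \<forall>p\<in>P. pauli_on n p \<Longrightarrow> isotropic {..<n} P \<Longrightarrow>
    f2_rank P div 2 \<le> k \<Longrightarrow> length (filter is_cnot C) \<le> cnot_budget k (card (remaining n P))"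
proof (induction rule: qd_run.induct)
  case (stop n P)
  then show ?case by simp
next
  case (stage R n P ra v w i gs rest)
  have Rn: "R \<subseteq> {..<n}" using stage.hyps(1) by (auto simp: remaining_def)
  then have "finite R" "i < n" using stage.hyps(8) finite_subset by auto
  have "finite P"
    using stage.prems(1) finite_supported[of "{..<n}" P] by (simp add: pauli_on_iff_supported)
  have "ra \<le> card R" using f2_rank_stage_le_remaining[OF stage.prems(2)] stage.hyps(1,3) by simp
  moreover have "ra \<le> f2_rank P"
    using f2_rank_image_le[OF \<open>finite P\<close> restrict_f2_linear] stage.hyps(3) by simp
  moreover have "length (filter is_cnot gs) \<le> ra div 2"
    using cnot_count_stage_circuit[OF Rn stage.hyps(4,8,9)] stage.hyps(7,10) by simp
  ultimately have cnots_gs: "length (filter is_cnot gs) \<le> min k (card R div 2)"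
    using stage.prems(3) div_le_mono[of ra] by fastforce
  let ?P' = "apply_circuit gs ` P"
  have gates: "list_all (gate_on n) gs"
    using stage_circuit_gate_on[OF \<open>i < n\<close>] stage.hyps(10) by simp
  have "f2_rank ?P' \<le> f2_rank P" using f2_rank_image_le[OF \<open>finite P\<close> apply_circuit_f2_linear] .
  then have "length (filter is_cnot rest) \<le> cnot_budget k (card (remaining n ?P'))"
    using stage.IH pauli_on_apply_circuit[OF gates] isotropic_apply_circuit[OF gates] stage.prems
      div_le_mono[of "f2_rank ?P'"] by fastforce
  also have "\<dots> \<le> cnot_budget k (card R - 1)"
    using remaining_stage_circuit[OF stage.hyps(1,4,6,8,9)] stage.hyps(10) \<open>finite R\<close>
    by (intro cnot_budget_mono) (metis card_Diff_singleton card_mono finite_Diff stage.hyps(8))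
  finally show ?case
    using cnots_gs stage.hyps(1,8) \<open>finite R\<close> card_gt_0_iff[of R]
    by (cases "card R") auto
qed

theorem theorem2:
  fixes n :: nat and P :: "pauli set" and C :: "gate list"
  assumes "\<forall>p\<in>P. pauli_on n p"
    and "\<forall>p\<in>P. \<forall>q\<in>P. commute n p q"
    and "r = f2_rank P"
    and "qd_run n P C"
  shows "int (length (filter is_cnot C)) \<le> int n * int (r div 2) - int (r div 2) ^ 2"
proof -
  define k where "k = r div 2"
  have iso: "isotropic {..<n} P"
    using assms(2) by (simp add: isotropic_def commute_iff_not_symplectic)
  have "r \<le> n"
    using f2_rank_isotropic_le[OF _ _ iso] assms(1,3) by (simp add: pauli_on_iff_supported)
  have "card (remaining n P) \<le> n" using card_mono[of "{..<n}" "remaining n P"]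
    by (auto simp: remaining_def)
  then have "length (filter is_cnot C) \<le> cnot_budget k n"
    using cnot_count_qd_run_le[OF assms(4,1) iso, of k] cnot_budget_mono assms(3) k_def
    by (meson le_trans order_refl)
  moreover have "cnot_budget k n + k * k = n * k"
    using cnot_budget_closed_form \<open>r \<le> n\<close> k_def by simp
  ultimately have "int (length (filter is_cnot C)) + int k * int k \<le> int n * int k"
    by (metis of_nat_add of_nat_le_iff of_nat_mult add_le_mono1)
  then show ?thesis unfolding k_def by (simp add: power2_eq_square)
qed

end
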